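(* If $T$ is a tree, then $\gamma(T)=\nu_2(T)$.
   Context: A tree is a simple connected graph without cycles. For a graph $G$ with vertex set $V$, let $X_G=\{x_u\mid u\in V\}$ be indeterminates and $L(G,X_G)$ the matrix with $L_{u,u}=x_u$ and $L_{u,v}=-m_{uv}$ ($u\neq v$), $m_{uv}$ the number of edges between $u$ and $v$. The $j$-critical ideal $I_j(G,X_G)\subseteq\mathbb{Z}[X_G]$ is generated by all $j\times j$ minors of $L(G,X_G)$. The algebraic co-rank is $\gamma(G)=\max\{j\mid I_j(G,X_G)=\mathbb{Z}[X_G]\}$ (taken to be $0$ if there is no such $j$). A $2$-matching of $G$ is a set of edges such that every vertex is incident to at most two of them; $\nu_2(G)$ is the maximum number of edges in a $2$-matching of $G$. *)

theory Defs
  imports "HOL-Library.Poly_Mapping" "HOL-Combinatorics.Permutations"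
begin

text \<open>Graphs: vertex set = the finite type 'v; edges = a set of 2-element vertex sets.\<close>

definition simple_graph :: "'v set set \<Rightarrow> bool" where
  "simple_graph E \<longleftrightarrow> (\<forall>e\<in>E. card e = 2)"

definition adj :: "'v set set \<Rightarrow> 'v \<Rightarrow> 'v \<Rightarrow> bool" where
  "adj E u v \<longleftrightarrow> {u, v} \<in> E"

definition connected_graph :: "'v set set \<Rightarrow> bool" where
  "connected_graph E \<longleftrightarrow> (\<forall>u v. (u, v) \<in> {(a, b). adj E a b}\<^sup>*)"

definition is_cycle :: "'v set set \<Rightarrow> 'v list \<Rightarrow> bool" where
  "is_cycle E xs \<longleftrightarrow> length xs \<ge> 3 \<and> distinct xs \<and>
     (\<forall>i < length xs. adj E (xs ! i) (xs ! ((i + 1) mod length xs)))"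

definition is_tree :: "'v set set \<Rightarrow> bool" where
  "is_tree E \<longleftrightarrow> simple_graph E \<and> connected_graph E \<and> (\<nexists>xs. is_cycle E xs)"

text \<open>Integer polynomials in the variables x_v (v a vertex): Z[X_G].\<close>
type_synonym 'v zpoly = "('v \<Rightarrow>\<^sub>0 nat) \<Rightarrow>\<^sub>0 int"

definition var :: "'v \<Rightarrow> 'v zpoly" where
  "var v = Poly_Mapping.single (Poly_Mapping.single v 1) 1"

text \<open>Generalized Laplacian L(G,X_G); for a simple graph m_uv = 1 iff uv is an edge.\<close>
definition gen_laplacian :: "'v set set \<Rightarrow> 'v \<Rightarrow> 'v \<Rightarrow> 'v zpoly" where
  "gen_laplacian E u v = (if u = v then var u else - (if {u, v} \<in> E then 1 else 0))"

definition minor :: "('v::linorder \<Rightarrow> 'v \<Rightarrow> 'r::comm_ring_1) \<Rightarrow> 'v set \<Rightarrow> 'v set \<Rightarrow> 'r" where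
  "minor L R C = (let rs = sorted_list_of_set R; cs = sorted_list_of_set C; j = card R in
     (\<Sum>p\<in>{p. p permutes {..<j}}. of_int (sign p) * (\<Prod>i<j. L (rs ! i) (cs ! (p i)))))"

definition minors :: "('v::{finite,linorder} \<Rightarrow> 'v \<Rightarrow> 'r::comm_ring_1) \<Rightarrow> nat \<Rightarrow> 'r set" where
  "minors L j = {minor L R C | R C. card R = j \<and> card C = j}"

definition ideal_gen :: "'r::comm_ring_1 set \<Rightarrow> 'r set" where
  "ideal_gen S = {p. \<exists>F c. finite F \<and> F \<subseteq> S \<and> p = (\<Sum>g\<in>F. c g * g)}"

definition critical_ideal :: "'v::{finite,linorder} set set \<Rightarrow> nat \<Rightarrow> 'v zpoly set" where
  "critical_ideal E j = ideal_gen (minors (gen_laplacian E) j)"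

definition algebraic_corank :: "'v::{finite,linorder} set set \<Rightarrow> nat" where
  "algebraic_corank E = (GREATEST j. critical_ideal E j = UNIV)"

definition two_matching :: "'v set set \<Rightarrow> 'v set set \<Rightarrow> bool" where
  "two_matching E M \<longleftrightarrow> M \<subseteq> E \<and> (\<forall>v. card {e \<in> M. v \<in> e} \<le> 2)"

definition nu2 :: "'v::finite set set \<Rightarrow> nat" where
  "nu2 E = Max (card ` {M. two_matching E M})"

end

theory Submission
  imports Defs "Jordan_Normal_Form.Determinant"
begin

text \<open>A list of oriented edges (u_i, w_i) is triangular if L(u_i, w_k) = 0 whenever i < k.
The rows u_i and columns w_i of L(G, X) then form a triangular submatrix with diagonal -1, so its
minor is a unit and \<gamma>(G) is at least the length of the list; the underlying edges form a
2-matching, so \<nu>_2(G) is at least the length as well. Conversely, for a vertex set Q, evaluating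
x_v at the degree of v in G - Q turns L into a matrix that agrees with the Laplacian of G - Q away
from the rows and columns of Q, hence has rank at most 2|Q| + |E(G - Q)|; so no larger minor
generates the unit ideal,
and no 2-matching is larger either, since at most 2|Q| of its edges meet Q. In a forest, deleting
a leaf whose neighbour has degree at most 2, or the common neighbour w of two leaves (adding w to
Q), produces by induction a triangular list of length at least 2|Q| + |E(G - Q)|.\<close>

section \<open>Evaluating integer polynomials\<close>

definition monomial_value :: "('v::finite \<Rightarrow> int) \<Rightarrow> ('v \<Rightarrow>\<^sub>0 nat) \<Rightarrow> int" where
  "monomial_value a m = (\<Prod>v\<in>UNIV. a v ^ Poly_Mapping.lookup m v)"

definition eval_zpoly :: "('v::finite \<Rightarrow> int) \<Rightarrow> 'v zpoly \<Rightarrow> int" where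
  "eval_zpoly a p = (\<Sum>m\<in>Poly_Mapping.keys p. Poly_Mapping.lookup p m * monomial_value a m)"

lemma monomial_value_add: "monomial_value a (k + l) = monomial_value a k * monomial_value a l"
  by (simp add: monomial_value_def lookup_add power_add prod.distrib)

lemma monomial_value_zero [simp]: "monomial_value a 0 = 1"
  by (simp add: monomial_value_def)

lemma eval_zpoly_superset:
  assumes "finite S" "Poly_Mapping.keys p \<subseteq> S"
  shows "eval_zpoly a p = (\<Sum>m\<in>S. Poly_Mapping.lookup p m * monomial_value a m)"
  unfolding eval_zpoly_def
  by (rule sum.mono_neutral_left) (use assms in \<open>auto simp: in_keys_iff\<close>)

lemma eval_zpoly_zero [simp]: "eval_zpoly a 0 = 0"
  by (simp add: eval_zpoly_def)

lemma eval_zpoly_add: "eval_zpoly a (p + q) = eval_zpoly a p + eval_zpoly a q"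
proof -
  let ?S = "Poly_Mapping.keys p \<union> Poly_Mapping.keys q"
  have "eval_zpoly a (p + q) = (\<Sum>m\<in>?S. Poly_Mapping.lookup (p + q) m * monomial_value a m)"
    by (rule eval_zpoly_superset) (auto dest: set_mp[OF keys_add])
  also have "\<dots> = (\<Sum>m\<in>?S. Poly_Mapping.lookup p m * monomial_value a m)
      + (\<Sum>m\<in>?S. Poly_Mapping.lookup q m * monomial_value a m)"
    by (simp add: lookup_add sum.distrib ring_distribs)
  also have "\<dots> = eval_zpoly a p + eval_zpoly a q"
    by (simp add: eval_zpoly_superset[symmetric])
  finally show ?thesis .
qed

lemma eval_zpoly_sum: "eval_zpoly a (sum f A) = (\<Sum>x\<in>A. eval_zpoly a (f x))"
  by (induction A rule: infinite_finite_induct) (auto simp: eval_zpoly_add)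

lemma eval_zpoly_single [simp]:
  "eval_zpoly a (Poly_Mapping.single m c) = c * monomial_value a m"
  by (simp add: eval_zpoly_def)

lemma zpoly_eq_sum_single:
  "p = (\<Sum>m\<in>Poly_Mapping.keys p. Poly_Mapping.single m (Poly_Mapping.lookup p m))"
  by (rule poly_mapping_eqI) (simp add: lookup_sum lookup_single when_def in_keys_iff)

lemma eval_zpoly_mult: "eval_zpoly a (p * q) = eval_zpoly a p * eval_zpoly a q"
proof -
  let ?c = "\<lambda>p m. Poly_Mapping.lookup p m"
  have "p * q = (\<Sum>k\<in>Poly_Mapping.keys p. \<Sum>l\<in>Poly_Mapping.keys q.
      Poly_Mapping.single (k + l) (?c p k * ?c q l))"
    by (subst zpoly_eq_sum_single[of p], subst zpoly_eq_sum_single[of q])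
      (simp add: sum_distrib_left sum_distrib_right mult_single, rule sum.swap)
  then have "eval_zpoly a (p * q) = (\<Sum>k\<in>Poly_Mapping.keys p. \<Sum>l\<in>Poly_Mapping.keys q.
      (?c p k * monomial_value a k) * (?c q l * monomial_value a l))"
    by (simp add: eval_zpoly_sum monomial_value_add mult_ac)
  then show ?thesis
    by (simp add: eval_zpoly_def sum_product)
qed

lemma eval_zpoly_one [simp]: "eval_zpoly a 1 = 1"
  using eval_zpoly_single[of a 0 1] by (simp del: eval_zpoly_single)

lemma eval_zpoly_uminus: "eval_zpoly a (- p) = - eval_zpoly a p"
  using eval_zpoly_add[of a p "- p"] by simp

lemma eval_zpoly_prod: "eval_zpoly a (prod f A) = (\<Prod>x\<in>A. eval_zpoly a (f x))"
  by (induction A rule: infinite_finite_induct) (auto simp: eval_zpoly_mult)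

lemma eval_zpoly_of_int [simp]: "eval_zpoly a (of_int z) = z"
  using eval_zpoly_single[of a 0 z]
  by (simp add: single_of_int[symmetric] del: eval_zpoly_single single_of_int)

lemma eval_zpoly_var [simp]: "eval_zpoly a (var v) = a v"
proof -
  have "monomial_value a (Poly_Mapping.single v 1) = (\<Prod>u\<in>UNIV. if v = u then a u else 1)"
    unfolding monomial_value_def by (intro prod.cong) (auto simp: lookup_single when_def)
  then show ?thesis by (simp add: var_def)
qed

lemma eval_zpoly_minor: "eval_zpoly a (minor L R C) = minor (\<lambda>u v. eval_zpoly a (L u v)) R C"
  by (simp add: minor_def Let_def eval_zpoly_sum eval_zpoly_mult eval_zpoly_prod)

section \<open>Minors\<close>

lemma minor_eq_det:
  fixes A :: "'v::linorder \<Rightarrow> 'v \<Rightarrow> 'r::comm_ring_1"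
  assumes "card R = j"
  shows "minor A R C =
    det (mat j j (\<lambda>(i, l). A (sorted_list_of_set R ! i) (sorted_list_of_set C ! l)))"
  unfolding minor_def Let_def assms
  by (subst det_def'[of _ j]) (auto simp: atLeast0LessThan intro!: sum.cong prod.cong)

lemma minor_eq_0_if_rank_less:
  fixes A :: "'v::linorder \<Rightarrow> 'v \<Rightarrow> 'r::comm_ring_1"
  assumes "finite T" and A: "\<And>u v. A u v = (\<Sum>t\<in>T. b t u * c t v)" and "card T < card R"
  shows "minor A R C = 0"
proof -
  define j where "j = card R"
  define rs where "rs = sorted_list_of_set R"
  define cs where "cs = sorted_list_of_set C"
  obtain h where h: "bij_betw h {..<card T} T"
    using ex_bij_betw_nat_finite[OF \<open>finite T\<close>] by (auto simp: atLeast0LessThan)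
  define B where "B = mat j j (\<lambda>(i, t). if t < card T then b (h t) (rs ! i) else 0)"
  define D where "D = mat j j (\<lambda>(t, l). if t < card T then c (h t) (cs ! l) else 0)"
  have B: "B \<in> carrier_mat j j" and D: "D \<in> carrier_mat j j"
    by (auto simp: B_def D_def)
  have "mat j j (\<lambda>(i, l). A (rs ! i) (cs ! l)) = B * D"
  proof (rule eq_matI)
    fix i l assume "i < dim_row (B * D)" "l < dim_col (B * D)"
    then have il: "i < j" "l < j" using B D by auto
    have "(B * D) $$ (i, l) = (\<Sum>t\<in>{..<card T}. b (h t) (rs ! i) * c (h t) (cs ! l))"
      using il \<open>card T < card R\<close> B D
      by (auto simp: scalar_prod_def B_def D_def j_def atLeast0LessThan
          intro!: sum.mono_neutral_cong_right split: if_splits)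
    also have "\<dots> = A (rs ! i) (cs ! l)"
      using sum.reindex_bij_betw[OF h] A by simp
    finally show "mat j j (\<lambda>(i, l). A (rs ! i) (cs ! l)) $$ (i, l) = (B * D) $$ (i, l)"
      using il by simp
  qed (use B D in auto)
  moreover have "det B = 0"
  proof -
    have "(\<Prod>i<j. transpose_mat B $$ (i, p i)) = 0" if "p permutes {..<j}" for p
      using permutes_in_image[OF that, of "card T"] \<open>card T < card R\<close>
      by (intro prod_zero bexI[of _ "card T"]) (auto simp: B_def j_def)
    then have "det (transpose_mat B) = 0"
      using B by (simp add: det_def' atLeast0LessThan)
    then show ?thesis using B by (simp add: det_transpose)
  qed
  ultimately show ?thesis
    by (simp add: minor_eq_det[OF j_def[symmetric]] det_mult[OF B D] flip: rs_def cs_def)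
qed

lemma minor_set_lists_eq_signed_det:
  fixes L :: "'v::linorder \<Rightarrow> 'v \<Rightarrow> 'r::comm_ring_1"
  assumes rl: "distinct rl" "length rl = j" and cl: "distinct cl" "length cl = j"
  obtains p q where "p permutes {..<j}" "q permutes {..<j}"
    "minor L (set rl) (set cl) =
      of_int (sign p * sign q) * det (mat j j (\<lambda>(a, b). L (rl ! a) (cl ! b)))"
proof -
  let ?rs = "sorted_list_of_set (set rl)" and ?cs = "sorted_list_of_set (set cl)"
  obtain p where p: "p permutes {..<j}" "permute_list p rl = ?rs"
    using mset_eq_permutation[of ?rs rl] rl by (auto simp: set_eq_iff_mset_eq_distinct[symmetric])
  obtain q where q: "q permutes {..<j}" "permute_list q cl = ?cs"
    using mset_eq_permutation[of ?cs cl] cl by (auto simp: set_eq_iff_mset_eq_distinct[symmetric])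
  have rs: "?rs ! i = rl ! p i" and cs: "?cs ! i = cl ! q i" if "i < j" for i
    using p q rl cl that by (metis permute_list_nth)+
  define N where "N = mat j j (\<lambda>(a, b). L (rl ! a) (cl ! b))"
  define N' where "N' = mat j j (\<lambda>(a, l). L (rl ! a) (cl ! q l))"
  have N: "N \<in> carrier_mat j j" and N': "N' \<in> carrier_mat j j"
    by (auto simp: N_def N'_def)
  have "minor L (set rl) (set cl) = det (mat j j (\<lambda>(i, l). L (?rs ! i) (?cs ! l)))"
    using rl by (intro minor_eq_det) (simp add: distinct_card)
  also have "mat j j (\<lambda>(i, l). L (?rs ! i) (?cs ! l)) = mat j j (\<lambda>(i, l). N' $$ (p i, l))"
    using permutes_in_image[OF p(1)] by (intro cong_mat) (simp_all add: N'_def rs cs)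
  also have "det \<dots> = of_int (sign p) * det N'"
    using det_permute_rows[OF N', of p] p(1) by (simp add: atLeast0LessThan)
  also have "det N' = det (mat j j (\<lambda>(l, a). transpose_mat N $$ (q l, a)))"
  proof -
    have "transpose_mat N' = mat j j (\<lambda>(l, a). transpose_mat N $$ (q l, a))"
      using permutes_in_image[OF q(1)] by (intro eq_matI) (auto simp: N_def N'_def)
    then show ?thesis using det_transpose[OF N'] by simp
  qed
  also have "\<dots> = of_int (sign q) * det N"
    using det_permute_rows[of "transpose_mat N" j q] q(1) N
    by (simp add: atLeast0LessThan det_transpose)
  finally have "minor L (set rl) (set cl) = of_int (sign p) * (of_int (sign q) * det N)" .
  then show ?thesis
    using that[OF p(1) q(1)] by (simp add: N_def mult.assoc)
qed

lemma minor_dvd_1_if_triangular: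
  fixes L :: "'v::linorder \<Rightarrow> 'v \<Rightarrow> 'r::comm_ring_1"
  assumes rl: "distinct rl" "length rl = j" and cl: "distinct cl" "length cl = j"
    and upper_zero: "\<And>a b. a < b \<Longrightarrow> b < j \<Longrightarrow> L (rl ! a) (cl ! b) = 0"
    and diag: "\<And>a. a < j \<Longrightarrow> L (rl ! a) (cl ! a) = d" and "d dvd 1"
  shows "minor L (set rl) (set cl) dvd 1"
proof -
  obtain e where e: "d * e = 1" using \<open>d dvd 1\<close> by (metis dvdE)
  obtain p q :: "nat \<Rightarrow> nat" where "minor L (set rl) (set cl) =
      of_int (sign p * sign q) * det (mat j j (\<lambda>(a, b). L (rl ! a) (cl ! b)))"
    using minor_set_lists_eq_signed_det[OF rl cl] by blast
  also have "det (mat j j (\<lambda>(a, b). L (rl ! a) (cl ! b))) = d ^ j"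
    using upper_zero diag by (subst det_lower_triangular[of j]) (auto simp: prod_list_diag_prod)
  finally have "minor L (set rl) (set cl) * (of_int (sign p * sign q) * e ^ j)
      = of_int (sign p * sign p) * of_int (sign q * sign q) * (d * e) ^ j"
    by (simp only: power_mult_distrib of_int_mult ac_simps)
  also have "\<dots> = 1"
    by (simp add: e sign_idempotent)
  finally show ?thesis
    by (rule dvdI[OF sym])
qed

section \<open>Leaves of forests\<close>

definition forest :: "'v set set \<Rightarrow> bool" where
  "forest E \<longleftrightarrow> simple_graph E \<and> (\<nexists>xs. is_cycle E xs)"

definition neighbours :: "'v set set \<Rightarrow> 'v \<Rightarrow> 'v set" where
  "neighbours E v = {u. {v, u} \<in> E}"

fun walk :: "'v set set \<Rightarrow> 'v list \<Rightarrow> bool" where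
  "walk E (x # y # zs) \<longleftrightarrow> {x, y} \<in> E \<and> walk E (y # zs)"
| "walk E _ \<longleftrightarrow> True"

lemma is_cycle_mono: "is_cycle E' xs \<Longrightarrow> E' \<subseteq> E \<Longrightarrow> is_cycle E xs"
  by (auto simp: is_cycle_def adj_def)

lemma forest_subset: "forest E \<Longrightarrow> E' \<subseteq> E \<Longrightarrow> forest E'"
  unfolding forest_def simple_graph_def using is_cycle_mono by blast

lemma simple_graph_loop_free: "simple_graph E \<Longrightarrow> {v, v} \<notin> E"
  by (auto simp: simple_graph_def)

lemma leaf_edge:
  assumes "simple_graph E" "neighbours E l = {w}" "e \<in> E" "l \<in> e"
  shows "e = {l, w}"
proof -
  obtain a b where "e = {a, b}"
    using assms(1,3) by (auto simp: simple_graph_def card_2_iff)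
  then obtain u where "e = {l, u}"
    using assms(4) by auto
  then show ?thesis using assms(2,3) by (auto simp: neighbours_def)
qed

lemma walk_append_left: "walk E (xs @ ys) \<Longrightarrow> walk E xs"
  by (induction E xs rule: walk.induct) auto

lemma walk_nth: "walk E xs \<Longrightarrow> Suc i < length xs \<Longrightarrow> {xs ! i, xs ! Suc i} \<in> E"
  by (induction E xs arbitrary: i rule: walk.induct) (auto simp: nth_Cons split: nat.splits)

lemma is_cycle_if_closed_walk:
  assumes "distinct xs" "length xs \<ge> 3" "walk E xs" "{last xs, hd xs} \<in> E"
  shows "is_cycle E xs"
  unfolding is_cycle_def
proof (intro conjI allI impI)
  fix i assume i: "i < length xs"
  show "adj E (xs ! i) (xs ! ((i + 1) mod length xs))"
  proof (cases "Suc i < length xs")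
    case True
    then show ?thesis using walk_nth[OF assms(3) True] by (simp add: adj_def)
  next
    case False
    then have "Suc i = length xs" using i by simp
    moreover have "xs ! i = last xs"
      using \<open>Suc i = length xs\<close> by (metis diff_Suc_1 last_conv_nth list.size(3) nat.distinct(1))
    moreover have "xs ! 0 = hd xs"
      using assms(2) by (cases xs) auto
    ultimately show ?thesis using assms(4) by (simp add: adj_def)
  qed
qed (use assms in auto)

lemma forest_no_chord:
  assumes "forest E" "distinct (u # xs)" "walk E (u # xs)" "y \<in> set (tl xs)"
  shows "{u, y} \<notin> E"
proof
  assume chord: "{u, y} \<in> E"
  have "y \<in> set xs"
    using assms(4) by (cases xs) auto
  then obtain as bs where xs: "xs = as @ y # bs"
    by (meson split_list)
  have "as \<noteq> []"
    using assms(2,4) xs by auto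
  have "is_cycle E (u # as @ [y])"
  proof (rule is_cycle_if_closed_walk)
    show "walk E (u # as @ [y])"
      using assms(3) walk_append_left[of E "u # as @ [y]" bs] xs by simp
    show "3 \<le> length (u # as @ [y])"
      using \<open>as \<noteq> []\<close> by (cases as) auto
    show "distinct (u # as @ [y])"
      using assms(2) xs by auto
    show "{last (u # as @ [y]), hd (u # as @ [y])} \<in> E"
      using chord by (simp add: insert_commute)
  qed
  then show False using assms(1) by (auto simp: forest_def)
qed

lemma forest_longest_path_starts_at_leaf:
  assumes "forest E" "distinct (v0 # v1 # rest)" "walk E (v0 # v1 # rest)"
    and longest: "\<And>ys. distinct ys \<Longrightarrow> walk E ys \<Longrightarrow> length ys \<le> length rest + 2"
  shows "neighbours E v0 = {v1}"
proof -
  have "y = v1" if "{v0, y} \<in> E" for y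
  proof (rule ccontr)
    assume "y \<noteq> v1"
    have "y \<noteq> v0"
      using that assms(1) by (auto simp: forest_def simple_graph_def)
    moreover have "y \<notin> set rest"
      using forest_no_chord[OF assms(1-3), of y] that by auto
    ultimately have "distinct (y # v0 # v1 # rest)" "walk E (y # v0 # v1 # rest)"
      using assms(2,3) that \<open>y \<noteq> v1\<close> by (auto simp: insert_commute)
    then show False using longest[of "y # v0 # v1 # rest"] by simp
  qed
  then show ?thesis using assms(3) by (auto simp: neighbours_def)
qed

lemma ex_longest_path:
  fixes E :: "'v::finite set set"
  assumes "{a, b} \<in> E" "a \<noteq> b"
  obtains v0 v1 rest where "distinct (v0 # v1 # rest)" "walk E (v0 # v1 # rest)"
    "\<And>ys. distinct ys \<Longrightarrow> walk E ys \<Longrightarrow> length ys \<le> length rest + 2"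
proof -
  define P where "P = {xs :: 'v list. distinct xs \<and> walk E xs}"
  have "finite P"
    by (rule finite_subset[OF _ finite_lists_length_le[OF finite_UNIV, of "card (UNIV :: 'v set)"]])
      (auto simp: P_def distinct_card[symmetric] card_mono)
  have "[a, b] \<in> P" using assms by (simp add: P_def)
  then have "Max (length ` P) \<in> length ` P"
    using \<open>finite P\<close> by (intro Max_in) auto
  then obtain xs where xs: "xs \<in> P" "length xs = Max (length ` P)"
    by auto
  have longest: "length ys \<le> length xs" if "distinct ys" "walk E ys" for ys
    using that xs(2) \<open>finite P\<close> by (auto simp: P_def)
  then have "2 \<le> length xs"
    using \<open>[a, b] \<in> P\<close> unfolding P_def by fastforce
  then obtain v0 v1 rest where "xs = v0 # v1 # rest"
    by (cases xs; cases "tl xs") auto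
  then show ?thesis
    using that xs(1) longest by (auto simp: P_def)
qed

lemma forest_leaf_structure:
  fixes E :: "'v::finite set set"
  assumes "forest E" "E \<noteq> {}"
  shows "(\<exists>l w. neighbours E l = {w} \<and> card (neighbours E w) \<le> 2) \<or>
    (\<exists>l1 l2 w. l1 \<noteq> l2 \<and> neighbours E l1 = {w} \<and> neighbours E l2 = {w})"
proof -
  obtain a b where "{a, b} \<in> E" "a \<noteq> b"
    using assms by (force simp: forest_def simple_graph_def card_2_iff)
  then obtain v0 v1 rest where path: "distinct (v0 # v1 # rest)" "walk E (v0 # v1 # rest)"
    and longest: "\<And>ys. distinct ys \<Longrightarrow> walk E ys \<Longrightarrow> length ys \<le> length rest + 2"
    by (rule ex_longest_path) blast
  have leaf0: "neighbours E v0 = {v1}"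
    using forest_longest_path_starts_at_leaf[OF assms(1) path longest] .
  show ?thesis
  proof (cases "card (neighbours E v1) \<le> 2")
    case False
    have "card {v0, hd rest} \<le> 2" by (simp add: card_insert_le_m1)
    then have "\<not> neighbours E v1 \<subseteq> {v0, hd rest}"
      using False card_mono[of "{v0, hd rest}" "neighbours E v1"] by auto
    then obtain x where x: "{v1, x} \<in> E" "x \<noteq> v0" "x \<noteq> hd rest"
      by (auto simp: neighbours_def)
    have "x \<noteq> v1"
      using x(1) assms(1) by (auto simp: forest_def simple_graph_def)
    moreover have "x \<notin> set rest"
    proof
      assume "x \<in> set rest"
      then have "x \<in> set (tl rest)" using x(3) by (cases rest) auto
      then show False
        using forest_no_chord[of E v1 rest x] assms(1) path x(1) by auto
    qed
    ultimately have "distinct (x # v1 # rest)" "walk E (x # v1 # rest)"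
      using path x(1) by (auto simp: insert_commute)
    then have "neighbours E x = {v1}"
      using forest_longest_path_starts_at_leaf[OF assms(1)] longest by simp
    then show ?thesis using leaf0 x(2) by blast
  qed (use leaf0 in blast)
qed

section \<open>Triangular edge lists\<close>

fun triangular_edge_list :: "'v set set \<Rightarrow> ('v \<times> 'v) list \<Rightarrow> bool" where
  "triangular_edge_list E [] \<longleftrightarrow> True"
| "triangular_edge_list E ((u, w) # s) \<longleftrightarrow> {u, w} \<in> E \<and>
    (\<forall>x\<in>set s. snd x \<noteq> u \<and> {u, snd x} \<notin> E) \<and> triangular_edge_list E s"

lemma triangular_edge_list_edge:
  "triangular_edge_list E s \<Longrightarrow> x \<in> set s \<Longrightarrow> {fst x, snd x} \<in> E"
  by (induction E s rule: triangular_edge_list.induct) auto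

lemma triangular_edge_list_append_single:
  "triangular_edge_list E (s @ [(u, w)]) \<longleftrightarrow> triangular_edge_list E s \<and> {u, w} \<in> E \<and>
    (\<forall>x\<in>set s. w \<noteq> fst x \<and> {fst x, w} \<notin> E)"
  by (induction E s rule: triangular_edge_list.induct) auto

lemma triangular_edge_list_nth:
  assumes "triangular_edge_list E s" "a < b" "b < length s"
  shows "snd (s ! b) \<noteq> fst (s ! a) \<and> {fst (s ! a), snd (s ! b)} \<notin> E"
  using assms
proof (induction E s arbitrary: a b rule: triangular_edge_list.induct)
  case (2 E u w s)
  then show ?case
    by (cases a; cases b) auto
qed simp

lemma triangular_edge_list_pair:
  assumes "triangular_edge_list E s" "x \<in> set s" "y \<in> set s" "x \<noteq> y"
  shows "(snd y \<noteq> fst x \<and> {fst x, snd y} \<notin> E) \<or> (snd x \<noteq> fst y \<and> {fst y, snd x} \<notin> E)"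
  using assms by (induction E s rule: triangular_edge_list.induct) auto

lemma triangular_edge_list_distinct:
  assumes "triangular_edge_list E s"
  shows "distinct (map fst s)" "distinct (map snd s)" "distinct (map (\<lambda>x. {fst x, snd x}) s)"
  using assms
  by (induction E s rule: triangular_edge_list.induct)
    (force simp: doubleton_eq_iff dest: triangular_edge_list_edge)+

lemma triangular_edge_list_delete_vertex:
  "triangular_edge_list {e \<in> E. v \<notin> e} s \<Longrightarrow> triangular_edge_list E s"
  by (induction "{e \<in> E. v \<notin> e}" s rule: triangular_edge_list.induct)
    (fastforce dest: triangular_edge_list_edge)+

lemma triangular_edge_list_not_row_and_column:
  fixes E :: "'v::finite set set"
  assumes "simple_graph E" "card (neighbours E v) \<le> 1" "triangular_edge_list E s"
  shows "v \<notin> fst ` set s \<or> v \<notin> snd ` set s"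
proof (rule ccontr)
  assume "\<not> ?thesis"
  then obtain x y where xy: "x \<in> set s" "y \<in> set s" "fst x = v" "snd y = v" by auto
  have "snd x \<in> neighbours E v" "fst y \<in> neighbours E v"
    using triangular_edge_list_edge[OF assms(3) xy(1)] triangular_edge_list_edge[OF assms(3) xy(2)]
      xy
    by (auto simp: neighbours_def insert_commute)
  then have "snd x = fst y"
    using assms(2) card_le_Suc0_iff_eq[of "neighbours E v"] by auto
  moreover have "x \<noteq> y"
    using triangular_edge_list_edge[OF assms(3) xy(1)] xy simple_graph_loop_free[OF assms(1)]
    by auto
  ultimately show False
    using triangular_edge_list_pair[OF assms(3) xy(1,2)] xy by auto
qed

definition deletion_bound :: "'v set set \<Rightarrow> 'v set \<Rightarrow> nat" where
  "deletion_bound E Q = 2 * card Q + card {e \<in> E. e \<inter> Q = {}}"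

lemma deletion_bound_delete_leaf:
  fixes E :: "'v::finite set set"
  assumes "simple_graph E" "neighbours E l = {w}"
  shows "deletion_bound E Q \<le> deletion_bound {e \<in> E. l \<notin> e} Q + 1"
proof -
  have "{e \<in> E. e \<inter> Q = {}} \<subseteq> insert {l, w} {e \<in> {e \<in> E. l \<notin> e}. e \<inter> Q = {}}"
    using leaf_edge[OF assms] by auto
  from card_mono[OF _ this] show ?thesis
    by (simp add: deletion_bound_def card_insert_if split: if_splits)
qed

lemma deletion_bound_insert:
  fixes E :: "'v::finite set set"
  shows "deletion_bound E (insert v Q) \<le> deletion_bound {e \<in> E. v \<notin> e} Q + 2"
proof -
  have "{e \<in> E. e \<inter> insert v Q = {}} = {e \<in> {e \<in> E. v \<notin> e}. e \<inter> Q = {}}"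
    by auto
  moreover have "card (insert v Q) \<le> card Q + 1"
    by (simp add: card_insert_if)
  ultimately show ?thesis
    by (simp add: deletion_bound_def)
qed

lemma triangular_edge_list_extend_leaf:
  fixes E :: "'v::finite set set"
  assumes sg: "simple_graph E" and leaf: "neighbours E l = {w}" and "card (neighbours E w) \<le> 2"
    and s: "triangular_edge_list {e \<in> E. l \<notin> e} s"
  obtains s' where "triangular_edge_list E s'" "length s' = Suc (length s)"
proof -
  let ?E' = "{e \<in> E. l \<notin> e}"
  have avoid_l: "fst x \<noteq> l" "snd x \<noteq> l" if "x \<in> set s" for x
    using triangular_edge_list_edge[OF s that] by auto
  have sE: "triangular_edge_list E s"
    using triangular_edge_list_delete_vertex[OF s] .
  have lw: "{l, w} \<in> E" "l \<in> neighbours E w"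
    using leaf by (auto simp: neighbours_def insert_commute)
  have "neighbours ?E' w \<subseteq> neighbours E w - {l}"
    by (auto simp: neighbours_def)
  moreover have "card (neighbours E w - {l}) \<le> 1"
    using \<open>card (neighbours E w) \<le> 2\<close> lw(2) by simp
  ultimately have "card (neighbours ?E' w) \<le> 1"
    by (meson card_mono finite order_trans)
  then consider "w \<notin> snd ` set s" | "w \<notin> fst ` set s"
    using triangular_edge_list_not_row_and_column[OF _ _ s] sg by (auto simp: simple_graph_def)
  then show ?thesis
  proof cases
    case 1
    have "snd x \<noteq> l \<and> {l, snd x} \<notin> E" if "x \<in> set s" for x
      using avoid_l[OF that] 1 that leaf by (force simp: neighbours_def)
    then have "triangular_edge_list E ((l, w) # s)"
      using lw(1) sE by simp
    then show ?thesis using that by fastforce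
  next
    case 2
    have "l \<noteq> fst x \<and> {fst x, l} \<notin> E" if "x \<in> set s" for x
      using avoid_l[OF that] 2 that leaf by (force simp: neighbours_def insert_commute)
    then have "triangular_edge_list E (s @ [(w, l)])"
      using lw(1) sE by (simp add: triangular_edge_list_append_single insert_commute)
    then show ?thesis using that by fastforce
  qed
qed

lemma triangular_edge_list_extend_cherry:
  assumes sg: "simple_graph E" and "l1 \<noteq> l2"
    and leaf1: "neighbours E l1 = {w}" and leaf2: "neighbours E l2 = {w}"
    and s: "triangular_edge_list {e \<in> E. w \<notin> e} s"
  shows "triangular_edge_list E ((l1, w) # s @ [(w, l2)])"
proof -
  have edge1: "{l1, u} \<in> E \<longleftrightarrow> u = w" and edge2: "{u, l2} \<in> E \<longleftrightarrow> u = w" for u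
    using leaf1 leaf2 unfolding neighbours_def
    by (blast, metis insert_commute mem_Collect_eq singleton_iff)
  have "w \<noteq> l2"
    using edge2[of w] sg simple_graph_loop_free by fastforce
  have avoid: "fst x \<notin> {w, l1, l2}" "snd x \<notin> {w, l1, l2}" if "x \<in> set s" for x
    using triangular_edge_list_edge[OF s that] leaf_edge[OF sg leaf1] leaf_edge[OF sg leaf2]
    by auto
  have "triangular_edge_list E (s @ [(w, l2)])"
    unfolding triangular_edge_list_append_single
    using triangular_edge_list_delete_vertex[OF s] edge2 avoid by fastforce
  moreover have "snd x \<noteq> l1 \<and> {l1, snd x} \<notin> E" if "x \<in> set (s @ [(w, l2)])" for x
    using that avoid(2)[of x] edge1 \<open>l1 \<noteq> l2\<close> \<open>w \<noteq> l2\<close> by auto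
  ultimately show ?thesis
    using edge1 by simp
qed

lemma forest_ex_triangular_edge_list:
  fixes E :: "'v::finite set set"
  assumes "forest E"
  shows "\<exists>s Q. triangular_edge_list E s \<and> deletion_bound E Q \<le> length s"
  using assms
proof (induction "card E" arbitrary: E rule: less_induct)
  case less
  have sg: "simple_graph E" using less.prems by (simp add: forest_def)
  have IH: "\<exists>s Q. triangular_edge_list {e \<in> E. v \<notin> e} s \<and>
      deletion_bound {e \<in> E. v \<notin> e} Q \<le> length s"
    if "e \<in> E" "v \<in> e" for v e
  proof (rule less.hyps)
    show "card {e \<in> E. v \<notin> e} < card E"
      using that by (intro psubset_card_mono) auto
    show "forest {e \<in> E. v \<notin> e}"
      using less.prems by (rule forest_subset) auto
  qed
  show ?case
  proof (cases "E = {}")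
    case True
    then show ?thesis by (intro exI[of _ "[]"] exI[of _ "{}"]) (simp add: deletion_bound_def)
  next
    case False
    then consider l w where "neighbours E l = {w}" "card (neighbours E w) \<le> 2"
      | l1 l2 w where "l1 \<noteq> l2" "neighbours E l1 = {w}" "neighbours E l2 = {w}"
      using forest_leaf_structure[OF less.prems] by blast
    then show ?thesis
    proof cases
      case (1 l w)
      then obtain s Q where s: "triangular_edge_list {e \<in> E. l \<notin> e} s"
          "deletion_bound {e \<in> E. l \<notin> e} Q \<le> length s"
        using IH[of "{l, w}" l] by (auto simp: neighbours_def)
      obtain s' where "triangular_edge_list E s'" "length s' = Suc (length s)"
        using triangular_edge_list_extend_leaf[OF sg 1 s(1)] .
      moreover have "deletion_bound E Q \<le> length s'"
        using deletion_bound_delete_leaf[OF sg 1(1), of Q] s(2) \<open>length s' = Suc (length s)\<close> by simp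
      ultimately show ?thesis by blast
    next
      case (2 l1 l2 w)
      then obtain s Q where s: "triangular_edge_list {e \<in> E. w \<notin> e} s"
          "deletion_bound {e \<in> E. w \<notin> e} Q \<le> length s"
        using IH[of "{l1, w}" w] by (auto simp: neighbours_def)
      show ?thesis
        using triangular_edge_list_extend_cherry[OF sg 2 s(1)] deletion_bound_insert[of E w Q] s(2)
        by (intro exI[of _ "(l1, w) # s @ [(w, l2)]"] exI[of _ "insert w Q"]) simp
    qed
  qed
qed

section \<open>Critical ideals and 2-matchings\<close>

lemma ideal_gen_eq_UNIV_if_unit:
  assumes "g \<in> S" "g dvd 1"
  shows "ideal_gen S = UNIV"
proof -
  obtain h where "1 = g * h" using assms(2) by (rule dvdE)
  then have "p = (\<Sum>g'\<in>{g}. (p * h) * g')" for p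
    by (simp add: mult.assoc mult.commute[of h])
  then have "p \<in> ideal_gen S" for p
    unfolding ideal_gen_def using assms(1)
    by (intro CollectI exI[of _ "{g}"] exI[of _ "\<lambda>_. p * h"]) simp
  then show ?thesis by blast
qed

lemma ideal_gen_ne_UNIV_if_eval_vanishes:
  assumes "\<And>g. g \<in> S \<Longrightarrow> eval_zpoly a g = 0"
  shows "ideal_gen S \<noteq> UNIV"
proof
  assume "ideal_gen S = UNIV"
  then obtain F c where F: "F \<subseteq> S" "1 = (\<Sum>g\<in>F. c g * g)"
    unfolding ideal_gen_def by blast
  have "eval_zpoly a (\<Sum>g\<in>F. c g * g) = 0"
    using assms F(1) by (auto simp: eval_zpoly_sum eval_zpoly_mult intro!: sum.neutral)
  then show False
    by (simp flip: F(2))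
qed

lemma critical_ideal_eq_UNIV_if_triangular:
  fixes E :: "'v::{finite,linorder} set set"
  assumes sg: "simple_graph E" and s: "triangular_edge_list E s"
  shows "critical_ideal E (length s) = UNIV"
proof -
  let ?L = "gen_laplacian E" and ?rl = "map fst s" and ?cl = "map snd s"
  have distinct: "distinct ?rl" "distinct ?cl"
    using triangular_edge_list_distinct[OF s] by auto
  have "minor ?L (set ?rl) (set ?cl) dvd 1"
  proof (rule minor_dvd_1_if_triangular[OF distinct(1) _ distinct(2)])
    fix a b assume "a < b" "b < length s"
    then show "?L (?rl ! a) (?cl ! b) = 0"
      using triangular_edge_list_nth[OF s \<open>a < b\<close> \<open>b < length s\<close>] by (auto simp: gen_laplacian_def)
  next
    fix a assume "a < length s"
    then have "{fst (s ! a), snd (s ! a)} \<in> E"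
      using triangular_edge_list_edge[OF s] by simp
    moreover have "fst (s ! a) \<noteq> snd (s ! a)"
      using calculation simple_graph_loop_free[OF sg] by auto
    ultimately show "?L (?rl ! a) (?cl ! a) = -1"
      using \<open>a < length s\<close> by (simp add: gen_laplacian_def)
  qed simp_all
  moreover have "minor ?L (set ?rl) (set ?cl) \<in> minors ?L (length s)"
    unfolding minors_def using distinct_card[OF distinct(1)] distinct_card[OF distinct(2)] by auto
  ultimately show ?thesis
    unfolding critical_ideal_def by (intro ideal_gen_eq_UNIV_if_unit)
qed

definition oriented_incidence :: "'v::linorder set \<Rightarrow> 'v \<Rightarrow> int" where
  "oriented_incidence e u = (if u = Min e then 1 else if u = Max e then -1 else 0)"

lemma oriented_incidence_mult:
  assumes "card e = 2"
  shows "oriented_incidence e u * oriented_incidence e v =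
    (if u \<in> e \<and> v \<in> e then if u = v then 1 else -1 else 0)"
proof -
  obtain x y where "e = {x, y}" "x \<noteq> y"
    using assms by (auto simp: card_2_iff)
  then show ?thesis
    by (auto simp: oriented_incidence_def min_def max_def)
qed

lemma sum_oriented_incidence_mult:
  assumes "finite S" "\<And>e. e \<in> S \<Longrightarrow> card e = 2"
  shows "(\<Sum>e\<in>S. oriented_incidence e u * oriented_incidence e v) =
    (if u = v then int (card {e \<in> S. u \<in> e}) else - (if {u, v} \<in> S then 1 else 0))"
proof (cases "u = v")
  case True
  then show ?thesis
    using assms by (simp add: oriented_incidence_mult sum.If_cases Int_def cong: sum.cong)
next
  case False
  have "u \<in> e \<and> v \<in> e \<longleftrightarrow> e = {u, v}" if "e \<in> S" for e
    using assms(2)[OF that] False by (auto simp: card_2_iff doubleton_eq_iff)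
  then have "(\<Sum>e\<in>S. oriented_incidence e u * oriented_incidence e v) =
      (\<Sum>e\<in>S. if e = {u, v} then -1 else 0)"
    using False assms by (intro sum.cong) (simp_all add: oriented_incidence_mult)
  then show ?thesis
    using False assms(1) by (simp add: sum.delta')
qed

lemma rank_decomposition_off_rows_and_columns:
  fixes A :: "'a \<Rightarrow> 'a \<Rightarrow> 'r::comm_ring_1"
  assumes "finite S" "finite Q"
    and f_Q: "\<And>e u. e \<in> S \<Longrightarrow> u \<in> Q \<Longrightarrow> f e u = 0"
    and A: "\<And>u v. u \<notin> Q \<Longrightarrow> v \<notin> Q \<Longrightarrow> A u v = (\<Sum>e\<in>S. f e u * f e v)"
  shows "\<exists>b c. \<forall>u v. A u v = (\<Sum>t \<in> S <+> (Q <+> Q). b t u * c t v)"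
proof (intro exI allI)
  fix u v
  \<comment> \<open>The terms indexed by S give A outside Q, the first copy of Q the rows in Q, and the second
    copy the columns in Q of the remaining rows.\<close>
  define b where "b t u = (case t of Inl e \<Rightarrow> f e u
    | Inr (Inl q) \<Rightarrow> of_bool (u = q) | Inr (Inr q) \<Rightarrow> of_bool (u \<notin> Q) * A u q)" for t u
  define c where "c t v = (case t of Inl e \<Rightarrow> f e v
    | Inr (Inl q) \<Rightarrow> A q v | Inr (Inr q) \<Rightarrow> of_bool (v = q))" for t v
  have "(\<Sum>t \<in> S <+> (Q <+> Q). b t u * c t v) = (\<Sum>e\<in>S. f e u * f e v)
      + (\<Sum>q\<in>Q. of_bool (u = q) * A q v) + (\<Sum>q\<in>Q. of_bool (u \<notin> Q) * A u q * of_bool (v = q))"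
    using assms(1,2) by (simp add: sum.Plus b_def c_def)
  also have "(\<Sum>e\<in>S. f e u * f e v) = (if u \<in> Q \<or> v \<in> Q then 0 else A u v)"
    using f_Q A by auto
  also have "(\<Sum>q\<in>Q. of_bool (u = q) * A q v) = (\<Sum>q\<in>Q. if u = q then A u v else 0)"
    by (rule sum.cong) auto
  also have "(\<Sum>q\<in>Q. of_bool (u \<notin> Q) * A u q * of_bool (v = q)) =
      (\<Sum>q\<in>Q. if v = q then of_bool (u \<notin> Q) * A u v else 0)"
    by (rule sum.cong) auto
  finally show "A u v = (\<Sum>t \<in> S <+> (Q <+> Q). b t u * c t v)"
    using assms(2) by (simp add: sum.delta)
qed

lemma critical_ideal_ne_UNIV_if_deletion_bound_less:
  fixes E :: "'v::{finite,linorder} set set"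
  assumes sg: "simple_graph E" and "deletion_bound E Q < j"
  shows "critical_ideal E j \<noteq> UNIV"
proof -
  define S where "S = {e \<in> E. e \<inter> Q = {}}"
  define a where "a v = int (card {e \<in> S. v \<in> e})" for v
  define A where "A u v = eval_zpoly a (gen_laplacian E u v)" for u v
  have S2: "card e = 2" if "e \<in> S" for e
    using sg that by (simp add: S_def simple_graph_def)
  have laplacian_off_Q: "A u v = (\<Sum>e\<in>S. oriented_incidence e u * oriented_incidence e v)"
    if "u \<notin> Q" "v \<notin> Q" for u v
  proof -
    have "{u, v} \<in> S \<longleftrightarrow> {u, v} \<in> E"
      using that by (auto simp: S_def)
    then show ?thesis
      by (simp add: sum_oriented_incidence_mult S2 A_def a_def gen_laplacian_def eval_zpoly_uminus)
  qed
  have incidence_Q: "oriented_incidence e u = 0" if "e \<in> S" "u \<in> Q" for e u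
  proof -
    have "u \<notin> e" using that by (auto simp: S_def)
    then show ?thesis using oriented_incidence_mult[OF S2[OF that(1)], of u u] by simp
  qed
  have "\<exists>b c. \<forall>u v. A u v = (\<Sum>t \<in> S <+> (Q <+> Q). b t u * c t v)"
    by (rule rank_decomposition_off_rows_and_columns) (simp_all add: incidence_Q laplacian_off_Q)
  then obtain b c where "\<And>u v. A u v = (\<Sum>t \<in> S <+> (Q <+> Q). b t u * c t v)"
    by blast
  moreover have "card (S <+> (Q <+> Q)) = deletion_bound E Q"
    by (simp add: card_Plus deletion_bound_def S_def)
  ultimately have "minor A R C = 0" if "card R = j" for R C
    using minor_eq_0_if_rank_less[of "S <+> (Q <+> Q)" A b c R C] that \<open>deletion_bound E Q < j\<close>
    by simp
  then have "eval_zpoly a g = 0" if "g \<in> minors (gen_laplacian E) j" for g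
    using that by (auto simp: minors_def eval_zpoly_minor A_def[abs_def])
  then show ?thesis
    unfolding critical_ideal_def by (rule ideal_gen_ne_UNIV_if_eval_vanishes)
qed

lemma card_two_matching_le_deletion_bound:
  fixes E :: "'v::finite set set"
  assumes "two_matching E M"
  shows "card M \<le> deletion_bound E Q"
proof -
  have "card {e \<in> M. e \<inter> Q \<noteq> {}} \<le> card (\<Union>q\<in>Q. {e \<in> M. q \<in> e})"
    by (rule card_mono) auto
  also have "\<dots> \<le> (\<Sum>q\<in>Q. card {e \<in> M. q \<in> e})"
    by (rule card_UN_le) simp
  also have "\<dots> \<le> 2 * card Q"
    using sum_mono[of Q "\<lambda>q. card {e \<in> M. q \<in> e}" "\<lambda>_. 2"] assms
    by (simp add: two_matching_def)
  finally have "card {e \<in> M. e \<inter> Q \<noteq> {}} \<le> 2 * card Q" .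
  moreover have "card {e \<in> M. e \<inter> Q = {}} \<le> card {e \<in> E. e \<inter> Q = {}}"
    using assms by (intro card_mono) (auto simp: two_matching_def)
  moreover have "card M \<le> card {e \<in> M. e \<inter> Q \<noteq> {}} + card {e \<in> M. e \<inter> Q = {}}"
    by (rule order_trans[OF _ card_Un_le]) (auto intro: card_mono)
  ultimately show ?thesis
    by (simp add: deletion_bound_def)
qed

lemma nu2_le_deletion_bound:
  fixes E :: "'v::finite set set"
  shows "nu2 E \<le> deletion_bound E Q"
proof -
  have "two_matching E {}" by (simp add: two_matching_def)
  then show ?thesis
    unfolding nu2_def using card_two_matching_le_deletion_bound by (subst Max_le_iff) auto
qed

lemma length_le_nu2_if_triangular:
  fixes E :: "'v::finite set set"
  assumes s: "triangular_edge_list E s"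
  shows "length s \<le> nu2 E"
proof -
  let ?edge = "\<lambda>x. {fst x, snd x}"
  have distinct: "distinct (map fst s)" "distinct (map snd s)" "distinct (map ?edge s)"
    using triangular_edge_list_distinct[OF s] by auto
  have "card (?edge ` set s) = length s"
    using distinct_card[OF distinct(3)] by simp
  moreover have "two_matching E (?edge ` set s)"
    unfolding two_matching_def
  proof (intro conjI allI)
    show "?edge ` set s \<subseteq> E"
      using triangular_edge_list_edge[OF s] by auto
    fix v
    have "card {e \<in> ?edge ` set s. v \<in> e}
        \<le> card (?edge ` ({x \<in> set s. fst x = v} \<union> {x \<in> set s. snd x = v}))"
      by (rule card_mono) auto
    also have "\<dots> \<le> card ({x \<in> set s. fst x = v} \<union> {x \<in> set s. snd x = v})"
      by (rule card_image_le) simp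
    also have "\<dots> \<le> card {x \<in> set s. fst x = v} + card {x \<in> set s. snd x = v}"
      by (rule card_Un_le)
    also have "\<dots> \<le> 1 + 1"
    proof -
      have "card {x \<in> set s. f x = v} \<le> card {v}" if "inj_on f (set s)" for f :: "'v \<times> 'v \<Rightarrow> 'v"
        using that by (intro card_inj_on_le) (auto intro: inj_on_subset)
      then show ?thesis
        using distinct(1,2) unfolding distinct_map by (intro add_mono) auto
    qed
    finally show "card {e \<in> ?edge ` set s. v \<in> e} \<le> 2" by simp
  qed
  ultimately have "length s \<in> card ` {M. two_matching E M}"
    by (intro image_eqI[of _ _ "?edge ` set s"]) auto
  then show ?thesis
    unfolding nu2_def by (intro Max_ge) auto
qed

theorem theorem3p8:
  fixes E :: "'v::{finite,linorder} set set"
  assumes "is_tree E"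
  shows "algebraic_corank E = nu2 E"
proof -
  have "forest E" using assms by (simp add: is_tree_def forest_def)
  then obtain s Q where s: "triangular_edge_list E s" and Q: "deletion_bound E Q \<le> length s"
    using forest_ex_triangular_edge_list by blast
  have sg: "simple_graph E" using \<open>forest E\<close> by (simp add: forest_def)
  have "algebraic_corank E = length s"
    unfolding algebraic_corank_def
  proof (rule Greatest_equality)
    show "critical_ideal E (length s) = UNIV"
      using critical_ideal_eq_UNIV_if_triangular[OF sg s] .
    show "j \<le> length s" if "critical_ideal E j = UNIV" for j
      using critical_ideal_ne_UNIV_if_deletion_bound_less[OF sg, of Q j] Q that by fastforce
  qed
  moreover have "nu2 E = length s"
    using length_le_nu2_if_triangular[OF s] nu2_le_deletion_bound[of E Q] Q by simp
  ultimately show ?thesis by simp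
qed

end
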